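(* Let $(a_n(q))$ be a $q$-Euler–Gauss sequence and $N\ge1$ an integer. If $a_d(1)\neq0$ for every divisor $d$ of $N$ such that $N/d$ is not a prime power, then $\sum_{d\mid N}\mu(d)\,a_{N/d}(q^d)\equiv0\pmod{[N]_q}$.
   Context: $\mu$ is the Möbius function, $[n]_q=1+q+\dots+q^{n-1}$; polynomial congruences modulo $[n]_q$ mean divisibility of the difference by $[n]_q$ in $\mathbb{Z}[q]$. A sequence $(a_n(q))$ in $\mathbb{Z}[q]$ is a $q$-Euler–Gauss sequence if for all $n\ge1$, $\prod_{d\mid n,\,\mu(d)=1}a_{n/d}(q^d)\equiv\prod_{d\mid n,\,\mu(d)=-1}a_{n/d}(q^d)\pmod{[n]_q}$. "$N/d$ is not a prime power" means $N/d$ has at least two distinct prime divisors ($1=p^0$ counts as a prime power). *)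

theory Defs
  imports "HOL-Computational_Algebra.Computational_Algebra"
begin

(* Moebius function on positive integers (value at 0 irrelevant; set to 0) *)
definition moebius :: "nat \<Rightarrow> int" where
  "moebius n = (if n = 0 \<or> \<not> squarefree n then 0 else (-1) ^ card (prime_factors n))"

definition qint :: "nat \<Rightarrow> int poly" where
  "qint n = (\<Sum>i<n. monom 1 i)"

definition qsubst :: "int poly \<Rightarrow> nat \<Rightarrow> int poly" where
  "qsubst p d = pcompose p (monom 1 d)"

definition q_euler_gauss :: "(nat \<Rightarrow> int poly) \<Rightarrow> bool" where
  "q_euler_gauss a \<longleftrightarrow> (\<forall>n\<ge>1.
     qint n dvd
       (\<Prod>d\<in>{d. d dvd n \<and> moebius d = 1}. qsubst (a (n div d)) d)
     - (\<Prod>d\<in>{d. d dvd n \<and> moebius d = -1}. qsubst (a (n div d)) d))"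

end

theory Submission
  imports Defs "HOL-Library.Disjoint_Sets"
begin

(* Let z be a primitive e-th root of unity with e | n | N. Evaluating the Euler-Gauss congruence
   for a_n at z gives a_n(z) = a_{n/e}(1), by strong induction on n: each factor a_{n/d}(z^d) with
   d > 1 is a smaller instance and equals a_{n/lcm(e,d)}(1); multiplying or dividing d by a prime
   p | e matches the factors with mu(d) = 1 against those with mu(d) = -1 and leaves a_n(z) alone,
   and the remaining common factors are nonzero by hypothesis, because mu(d) = 1 with d > 1 forces
   two distinct prime factors. For a nontrivial N-th root of unity z of order e > 1, the Moebius
   sum thus evaluates to the sum of mu(d) a_{N/lcm(e,d)}(1), which the same involution cancels.
   Since [N]_q is monic with the nontrivial N-th roots of unity as simple roots, it divides the
   sum. *)

abbreviation cpoly :: "int poly \<Rightarrow> complex \<Rightarrow> complex" where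
  "cpoly p \<equiv> poly (map_poly of_int p)"

lemma map_poly_of_int_add:
  "map_poly (of_int :: int \<Rightarrow> 'a :: comm_ring_1) (p + q) = map_poly of_int p + map_poly of_int q"
  by (rule poly_eqI) (simp add: coeff_map_poly)

lemma map_poly_of_int_diff:
  "map_poly (of_int :: int \<Rightarrow> 'a :: comm_ring_1) (p - q) = map_poly of_int p - map_poly of_int q"
  by (rule poly_eqI) (simp add: coeff_map_poly)

lemma map_poly_of_int_smult:
  "map_poly (of_int :: int \<Rightarrow> 'a :: comm_ring_1) (smult c p) = smult (of_int c) (map_poly of_int p)"
  by (rule map_poly_smult) simp_all

lemma map_poly_of_int_mult:
  "map_poly (of_int :: int \<Rightarrow> 'a :: comm_ring_1) (p * q) = map_poly of_int p * map_poly of_int q"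
  by (induction p) (simp_all add: map_poly_pCons map_poly_of_int_add map_poly_of_int_smult)

lemma map_poly_of_int_sum:
  "map_poly (of_int :: int \<Rightarrow> 'a :: comm_ring_1) (\<Sum>i\<in>A. f i) = (\<Sum>i\<in>A. map_poly of_int (f i))"
  by (induction A rule: infinite_finite_induct) (simp_all add: map_poly_of_int_add)

lemma map_poly_of_int_prod:
  "map_poly (of_int :: int \<Rightarrow> 'a :: comm_ring_1) (\<Prod>i\<in>A. f i) = (\<Prod>i\<in>A. map_poly of_int (f i))"
  by (induction A rule: infinite_finite_induct) (simp_all add: map_poly_of_int_mult)

lemma map_poly_of_int_pcompose:
  "map_poly (of_int :: int \<Rightarrow> 'a :: comm_ring_1) (pcompose p q) =
     pcompose (map_poly of_int p) (map_poly of_int q)"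
  by (induction p)
    (simp_all add: map_poly_pCons pcompose_pCons map_poly_of_int_add map_poly_of_int_mult)

lemma poly_map_poly_of_int:
  "poly (map_poly (of_int :: int \<Rightarrow> 'a :: comm_ring_1) p) (of_int x) = of_int (poly p x)"
  by (induction p) (simp_all add: map_poly_pCons)

lemma cpoly_qsubst: "cpoly (qsubst p d) z = cpoly p (z ^ d)"
  by (simp add: qsubst_def map_poly_of_int_pcompose poly_pcompose map_poly_monom poly_monom)

lemma coeff_qint: "coeff (qint n) i = (if i < n then 1 else 0)"
  by (simp add: qint_def coeff_sum)

lemma degree_qint: "degree (qint n) = n - 1"
proof (cases n)
  case 0
  then show ?thesis by (simp add: qint_def)
next
  case (Suc m)
  then show ?thesis by (intro antisym degree_le le_degree) (auto simp: coeff_qint)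
qed

lemma lead_coeff_qint: "0 < n \<Longrightarrow> lead_coeff (qint n) = 1"
  by (simp add: degree_qint coeff_qint)

lemma cpoly_qint: "cpoly (qint n) z = (\<Sum>i<n. z ^ i)"
  by (simp add: qint_def map_poly_of_int_sum map_poly_monom poly_sum poly_monom)

lemma cpoly_qint_root_of_unity: "z ^ n = 1 \<Longrightarrow> z \<noteq> 1 \<Longrightarrow> cpoly (qint n) z = 0"
  by (simp add: cpoly_qint sum_gp_strict)

lemma monic_dvd_if_vanishes_on_roots:
  fixes f g :: "int poly" and Z :: "complex set"
  assumes monic: "lead_coeff g = 1" and card: "degree g \<le> card Z"
    and g_Z: "\<And>z. z \<in> Z \<Longrightarrow> cpoly g z = 0" and f_Z: "\<And>z. z \<in> Z \<Longrightarrow> cpoly f z = 0"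
  shows "g dvd f"
proof -
  have "g \<noteq> 0" using monic by auto
  obtain q r where qr: "pseudo_divmod f g = (q, r)" by (cases "pseudo_divmod f g")
  from pseudo_divmod[OF \<open>g \<noteq> 0\<close> qr] monic
  have f: "f = g * q + r" and r: "r = 0 \<or> degree r < degree g" by simp_all
  have "r = 0"
  proof (rule ccontr)
    assume "r \<noteq> 0"
    then have r_C: "map_poly (of_int :: int \<Rightarrow> complex) r \<noteq> 0"
      by (simp add: map_poly_eq_0_iff)
    have "Z \<subseteq> {z. cpoly r z = 0}"
      using f g_Z f_Z by (auto simp: map_poly_of_int_add map_poly_of_int_mult)
    then have "card Z \<le> card {z. cpoly r z = 0}"
      by (intro card_mono poly_roots_finite r_C)
    also have "\<dots> \<le> degree (map_poly (of_int :: int \<Rightarrow> complex) r)"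
      by (rule card_poly_roots_bound[OF r_C])
    also have "\<dots> \<le> degree r" by (rule map_poly_degree_leq)
    finally show False using r card \<open>r \<noteq> 0\<close> by linarith
  qed
  with f show ?thesis by simp
qed

lemma qint_dvd_iff:
  assumes "0 < n"
  shows "qint n dvd f \<longleftrightarrow> (\<forall>z. z ^ n = 1 \<longrightarrow> z \<noteq> 1 \<longrightarrow> cpoly f z = 0)"
proof
  assume "qint n dvd f"
  then obtain c where "f = qint n * c" by (elim dvdE)
  then show "\<forall>z. z ^ n = 1 \<longrightarrow> z \<noteq> 1 \<longrightarrow> cpoly f z = 0"
    by (simp add: map_poly_of_int_mult cpoly_qint_root_of_unity)
next
  assume roots: "\<forall>z. z ^ n = 1 \<longrightarrow> z \<noteq> 1 \<longrightarrow> cpoly f z = 0"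
  have "card ({z :: complex. z ^ n = 1} - {1}) = n - 1"
    using assms by (simp add: card_roots_unity_eq finite_roots_unity)
  then show "qint n dvd f"
    using assms roots cpoly_qint_root_of_unity
    by (intro monic_dvd_if_vanishes_on_roots[OF lead_coeff_qint[OF assms], where Z = "{z. z ^ n = 1} - {1}"])
      (auto simp: degree_qint)
qed

definition primitive_root :: "nat \<Rightarrow> 'a :: monoid_mult \<Rightarrow> bool" where
  "primitive_root e z \<longleftrightarrow> 0 < e \<and> (\<forall>k. z ^ k = 1 \<longleftrightarrow> e dvd k)"

lemma primitive_root_exists:
  assumes "z ^ n = 1" "0 < n"
  obtains e where "primitive_root e z" "e dvd n"
proof -
  define e where "e = (LEAST k. 0 < k \<and> z ^ k = 1)"
  have e: "0 < e" "z ^ e = 1"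
    using LeastI[of "\<lambda>k. 0 < k \<and> z ^ k = 1" n] assms by (auto simp: e_def)
  have "z ^ k = 1 \<longleftrightarrow> e dvd k" for k
  proof
    assume "z ^ k = 1"
    moreover have "z ^ k = z ^ (k mod e)"
    proof -
      have "z ^ k = (z ^ e) ^ (k div e) * z ^ (k mod e)"
        by (simp flip: power_add power_mult)
      with e(2) show ?thesis by simp
    qed
    ultimately have "\<not> (0 < k mod e \<and> k mod e < e)"
      using not_less_Least[of "k mod e" "\<lambda>k. 0 < k \<and> z ^ k = 1"] by (auto simp: e_def)
    then show "e dvd k" using e(1) by (simp add: dvd_eq_mod_eq_0)
  next
    assume "e dvd k"
    then show "z ^ k = 1" using e(2) by (auto simp: power_mult)
  qed
  with e(1) assms have "primitive_root e z" "e dvd n" by (auto simp: primitive_root_def)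
  then show thesis by (rule that)
qed

lemma primitive_root_eq_1_iff:
  assumes "primitive_root e z"
  shows "z = 1 \<longleftrightarrow> e = 1"
proof -
  have "z ^ 1 = 1 \<longleftrightarrow> e dvd 1" using assms by (simp only: primitive_root_def)
  then show ?thesis by simp
qed

lemma dvd_mult_iff_div_gcd_dvd:
  fixes e d k :: nat
  assumes "0 < e"
  shows "e dvd d * k \<longleftrightarrow> e div gcd e d dvd k"
proof -
  define g where "g = gcd e d"
  have "0 < g" using assms by (simp add: g_def)
  have e: "e = g * (e div g)" and d: "d = g * (d div g)" by (simp_all add: g_def)
  have "coprime (e div g) (d div g)" using assms div_gcd_coprime[of e d] by (simp add: g_def)
  have "e dvd d * k \<longleftrightarrow> g * (e div g) dvd g * ((d div g) * k)"
    using e d by (metis mult.assoc)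
  also have "\<dots> \<longleftrightarrow> e div g dvd (d div g) * k" using \<open>0 < g\<close> by simp
  also have "\<dots> \<longleftrightarrow> e div g dvd k"
    using \<open>coprime (e div g) (d div g)\<close> by (simp add: coprime_dvd_mult_right_iff)
  finally show ?thesis by (simp add: g_def)
qed

lemma primitive_root_power:
  assumes "primitive_root e z"
  shows "primitive_root (e div gcd e d) (z ^ d)"
  using assms dvd_mult_iff_div_gcd_dvd[of e d]
  by (auto simp: primitive_root_def power_mult[symmetric] div_greater_zero_iff)

lemma lcm_eq_mult_div_gcd: "lcm e d = d * (e div gcd e d)" for e d :: nat
  by (simp add: lcm_nat_def div_mult_swap mult.commute)

lemma div_gcd_dvd_div:
  fixes e d n :: nat
  assumes "e dvd n" "d dvd n"
  shows "e div gcd e d dvd n div d"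
proof (cases "d = 0")
  case False
  have "lcm e d dvd n" using assms by simp
  with False assms(2) show ?thesis by (simp add: dvd_div_iff_mult lcm_eq_mult_div_gcd mult.commute)
qed (use assms in simp)

lemma div_div_div_gcd: "n div d div (e div gcd e d) = n div lcm e d" for n d e :: nat
  by (simp only: lcm_eq_mult_div_gcd div_mult2_eq)

lemma squarefree_iff_moebius_nonzero: "squarefree d \<longleftrightarrow> moebius d \<noteq> 0"
  by (auto simp: moebius_def)

lemma moebius_mult_prime:
  assumes "prime p" "squarefree d" "\<not> p dvd d"
  shows "moebius (d * p) = - moebius d"
proof -
  have "coprime d p" using prime_imp_coprime[OF assms(1,3)] by (simp add: ac_simps)
  then have "squarefree (d * p)"
    using assms by (simp add: squarefree_mult_coprime squarefree_prime)
  moreover have "prime_factors (d * p) = insert p (prime_factors d)"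
    using assms by (subst prime_factors_product) (auto simp: prime_prime_factors intro!: Nat.gr0I)
  moreover have "p \<notin> prime_factors d" using assms by auto
  ultimately show ?thesis using assms by (auto simp: moebius_def)
qed

lemma card_prime_factors_ge_2_if_moebius_eq_1:
  assumes "moebius d = 1" "d \<noteq> 1"
  shows "2 \<le> card (prime_factors d)"
proof -
  have "d \<noteq> 0" and "even (card (prime_factors d))"
    using assms by (auto simp: moebius_def minus_one_power_iff split: if_splits)
  moreover obtain p where "prime p" "p dvd d" using prime_factor_nat[OF assms(2)] by blast
  ultimately have "p \<in> prime_factors d" by (auto simp: in_prime_factors_iff)
  then have "card (prime_factors d) \<noteq> 0" by auto
  with \<open>even (card (prime_factors d))\<close> show ?thesis by presburger
qed

definition toggle :: "nat \<Rightarrow> nat \<Rightarrow> nat" where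
  "toggle p d = (if p dvd d then d div p else d * p)"

lemma toggle_cases:
  assumes "prime p" "squarefree d"
  obtains k where "squarefree k" "\<not> p dvd k" "d = k" "toggle p d = k * p"
    | k where "squarefree k" "\<not> p dvd k" "d = k * p" "toggle p d = k"
proof (cases "p dvd d")
  case True
  define k where "k = d div p"
  have d: "d = k * p" using True by (simp add: k_def)
  have "squarefree k" using assms(2) d squarefree_multD by blast
  moreover have "\<not> p dvd k"
  proof
    assume "p dvd k"
    then have "p ^ 2 dvd d" by (auto simp: d power2_eq_square)
    with assms show False using not_prime_unit by (auto simp: squarefree_def)
  qed
  moreover have "toggle p d = k" using True by (simp add: toggle_def k_def)
  ultimately show thesis using d that(2) by blast
next
  case False
  with assms that(1) show thesis by (simp add: toggle_def)
qed

lemma moebius_toggle: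
  assumes "prime p" "squarefree d"
  shows "moebius (toggle p d) = - moebius d"
  using assms by (cases rule: toggle_cases) (simp_all add: moebius_mult_prime assms(1))

lemma squarefree_toggle:
  assumes "prime p" "squarefree d"
  shows "squarefree (toggle p d)"
  using assms by (simp add: squarefree_iff_moebius_nonzero moebius_toggle)

lemma toggle_neq:
  assumes "prime p" "squarefree d"
  shows "toggle p d \<noteq> d"
  using moebius_toggle[OF assms] assms(2) by (auto simp: squarefree_iff_moebius_nonzero)

lemma toggle_toggle:
  assumes "prime p" "squarefree d"
  shows "toggle p (toggle p d) = d"
  using assms by (cases rule: toggle_cases) (auto simp: toggle_def prime_gt_0_nat assms(1))

lemma toggle_dvd:
  assumes "prime p" "squarefree d" "p dvd n" "d dvd n"
  shows "toggle p d dvd n"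
  using assms(1,2)
proof (cases rule: toggle_cases)
  case (1 k)
  then have "coprime k p" using prime_imp_coprime[OF assms(1)] by (simp add: ac_simps)
  with 1 assms(3,4) show ?thesis by (simp add: divides_mult)
next
  case (2 k)
  with assms(4) show ?thesis by (simp add: dvd_mult_left)
qed

lemma lcm_toggle:
  assumes "prime p" "squarefree d" "p dvd e"
  shows "lcm e (toggle p d) = lcm e d"
proof -
  have "lcm e (k * p) = lcm e k" if "\<not> p dvd k" for k
  proof -
    have "coprime k p" using prime_imp_coprime[OF assms(1) that] by (simp add: ac_simps)
    then have "lcm e (k * p) = lcm (lcm e p) k" by (simp add: lcm_coprime ac_simps)
    also have "lcm e p = e" using assms(3) by (simp add: lcm_proj1_if_dvd)
    finally show ?thesis .
  qed
  with assms(1,2) show ?thesis by (cases rule: toggle_cases) simp_all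
qed

lemma sum_moebius_lcm_eq_0:
  fixes G :: "nat \<Rightarrow> 'a :: comm_ring_1"
  assumes "0 < n" "e dvd n" "e \<noteq> 1"
  shows "(\<Sum>d | d dvd n. of_int (moebius d) * G (lcm e d)) = 0"
proof -
  obtain p where p: "prime p" "p dvd e" using prime_factor_nat[OF assms(3)] by blast
  with assms(2) have "p dvd n" by (blast intro: dvd_trans)
  have "(\<Sum>d | d dvd n. of_int (moebius d) * G (lcm e d)) =
      (\<Sum>d | d dvd n \<and> squarefree d. of_int (moebius d) * G (lcm e d))"
    using assms(1) by (intro sum.mono_neutral_right) (auto simp: squarefree_iff_moebius_nonzero)
  also have "\<dots> = 0"
    by (rule sum_involution_eq_0[where h = "toggle p"])
      (auto simp: p \<open>p dvd n\<close> moebius_toggle lcm_toggle toggle_dvd squarefree_toggle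
        toggle_toggle toggle_neq)
  finally show ?thesis .
qed

lemma prod_moebius_lcm_eq:
  fixes G :: "nat \<Rightarrow> 'a :: comm_monoid_mult"
  assumes "e dvd n" "e \<noteq> 1"
  shows "(\<Prod>d | d dvd n \<and> moebius d = 1. G (lcm e d)) =
    (\<Prod>d | d dvd n \<and> moebius d = -1. G (lcm e d))"
proof -
  obtain p where p: "prime p" "p dvd e" using prime_factor_nat[OF assms(2)] by blast
  with assms(1) have "p dvd n" by (blast intro: dvd_trans)
  have sf: "squarefree d" if "moebius d = 1 \<or> moebius d = -1" for d
    using that by (auto simp: squarefree_iff_moebius_nonzero)
  have "bij_betw (toggle p) {d. d dvd n \<and> moebius d = 1} {d. d dvd n \<and> moebius d = -1}"
    by (rule bij_betw_byWitness[where f' = "toggle p"])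
      (auto simp: p \<open>p dvd n\<close> sf toggle_toggle toggle_dvd moebius_toggle)
  have "(\<Prod>d | d dvd n \<and> moebius d = 1. G (lcm e d)) =
      (\<Prod>d | d dvd n \<and> moebius d = 1. G (lcm e (toggle p d)))"
    by (intro prod.cong) (auto simp: lcm_toggle p sf)
  also have "\<dots> = (\<Prod>d | d dvd n \<and> moebius d = -1. G (lcm e d))"
    using \<open>bij_betw _ _ _\<close> by (rule prod.reindex_bij_betw)
  finally show ?thesis .
qed

lemma q_euler_gauss_prod_at_root_of_unity:
  assumes "q_euler_gauss a" "0 < n" "z ^ n = 1" "z \<noteq> 1"
  shows "(\<Prod>d | d dvd n \<and> moebius d = 1. cpoly (a (n div d)) (z ^ d)) =
    (\<Prod>d | d dvd n \<and> moebius d = -1. cpoly (a (n div d)) (z ^ d))"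
proof -
  have "qint n dvd (\<Prod>d | d dvd n \<and> moebius d = 1. qsubst (a (n div d)) d) -
      (\<Prod>d | d dvd n \<and> moebius d = -1. qsubst (a (n div d)) d)"
    using assms(1,2) by (simp add: q_euler_gauss_def)
  with assms(2-4) show ?thesis
    by (simp add: qint_dvd_iff map_poly_of_int_diff map_poly_of_int_prod poly_prod
      flip: cpoly_qsubst)
qed

locale q_euler_gauss_nonvanishing =
  fixes a :: "nat \<Rightarrow> int poly" and N :: nat
  assumes euler_gauss: "q_euler_gauss a" and N_pos: "N \<ge> 1"
    and nonzero_at_1: "\<And>d. d dvd N \<Longrightarrow> card (prime_factors (N div d)) \<ge> 2 \<Longrightarrow> poly (a d) 1 \<noteq> 0"
begin

lemma nonzero_at_1_div:
  assumes "n dvd N" "l dvd n" "d dvd l" "moebius d = 1" "d \<noteq> 1"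
  shows "poly (a (n div l)) 1 \<noteq> 0"
proof (rule nonzero_at_1)
  obtain c where N: "N = n * c" using assms(1) by (elim dvdE)
  obtain m where n: "n = l * m" using assms(2) by (elim dvdE)
  have "m \<noteq> 0" "l \<noteq> 0" "c \<noteq> 0" using N n N_pos by auto
  then have m: "n div l = m" "N div m = l * c" using N n by simp_all
  then show "n div l dvd N" using N n by simp
  have "d dvd N div (n div l)" using assms(3) by (simp add: m)
  then have "prime_factors d \<subseteq> prime_factors (N div (n div l))"
    by (rule dvd_prime_factors[rotated]) (simp add: m \<open>l \<noteq> 0\<close> \<open>c \<noteq> 0\<close>)
  then have "card (prime_factors d) \<le> card (prime_factors (N div (n div l)))"
    by (intro card_mono) simp_all
  with card_prime_factors_ge_2_if_moebius_eq_1[OF assms(4,5)]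
  show "2 \<le> card (prime_factors (N div (n div l)))" by linarith
qed

lemma value_at_primitive_root_step:
  assumes "n dvd N" "primitive_root e z" "e dvd n" "e \<noteq> 1"
    and reduce: "\<And>d. d dvd n \<Longrightarrow> d \<noteq> 1 \<Longrightarrow>
      cpoly (a (n div d)) (z ^ d) = of_int (poly (a (n div lcm e d)) 1)"
  shows "cpoly (a n) z = of_int (poly (a (n div e)) 1)"
proof -
  define g where "g d = (of_int (poly (a (n div lcm e d)) 1) :: complex)" for d
  define S where "S = {d. d dvd n \<and> moebius d = 1}"
  define T where "T = {d. d dvd n \<and> moebius d = -1}"
  have "0 < n" using assms(1) N_pos by (auto intro: Nat.gr0I)
  then have "finite S" by (simp add: S_def)
  have "1 \<in> S" "1 \<notin> T" by (simp_all add: S_def T_def moebius_def)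
  have "z ^ n = 1" "z \<noteq> 1"
    using assms(2-4) primitive_root_eq_1_iff[OF assms(2)] by (auto simp: primitive_root_def)
  have "(\<Prod>d\<in>S - {1}. g d) = (\<Prod>d\<in>S - {1}. cpoly (a (n div d)) (z ^ d))"
    by (intro prod.cong) (auto simp: S_def g_def reduce)
  then have "cpoly (a n) z * (\<Prod>d\<in>S - {1}. g d) = (\<Prod>d\<in>S. cpoly (a (n div d)) (z ^ d))"
    by (simp add: prod.remove[OF \<open>finite S\<close> \<open>1 \<in> S\<close>])
  also have "\<dots> = (\<Prod>d\<in>T. cpoly (a (n div d)) (z ^ d))"
    unfolding S_def T_def
    by (rule q_euler_gauss_prod_at_root_of_unity[OF euler_gauss \<open>0 < n\<close>]) fact+
  also have "\<dots> = (\<Prod>d\<in>T. g d)"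
    unfolding g_def using \<open>1 \<notin> T\<close> by (intro prod.cong reduce) (auto simp: T_def)
  also have "\<dots> = (\<Prod>d\<in>S. g d)"
    unfolding S_def T_def g_def by (rule prod_moebius_lcm_eq[OF assms(3,4), symmetric])
  also have "\<dots> = g 1 * (\<Prod>d\<in>S - {1}. g d)"
    using \<open>finite S\<close> \<open>1 \<in> S\<close> by (rule prod.remove)
  finally have "cpoly (a n) z * (\<Prod>d\<in>S - {1}. g d) = g 1 * (\<Prod>d\<in>S - {1}. g d)" .
  moreover have "g d \<noteq> 0" if "d \<in> S - {1}" for d
    using that nonzero_at_1_div[OF assms(1) _ dvd_lcm2, of e d] assms(3)
    by (auto simp: S_def g_def)
  then have "(\<Prod>d\<in>S - {1}. g d) \<noteq> 0" using \<open>finite S\<close> by simp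
  ultimately show ?thesis by (simp add: g_def)
qed

lemma value_at_primitive_root:
  assumes "n dvd N" "primitive_root e z" "e dvd n"
  shows "cpoly (a n) z = of_int (poly (a (n div e)) 1)"
  using assms
proof (induction n arbitrary: e z rule: less_induct)
  case (less n)
  show ?case
  proof (cases "e = 1")
    case True
    then have "z = 1" using primitive_root_eq_1_iff[OF less.prems(2)] by simp
    with True show ?thesis using poly_map_poly_of_int[of p 1 for p] by simp
  next
    case False
    show ?thesis
    proof (rule value_at_primitive_root_step[OF less.prems False])
      fix d assume "d dvd n" "d \<noteq> 1"
      have "0 < n" using less.prems(1) N_pos by (auto intro: Nat.gr0I)
      with \<open>d dvd n\<close> have "0 < d" by (auto intro: Nat.gr0I)
      with \<open>d \<noteq> 1\<close> \<open>0 < n\<close> have "n div d < n" by (intro div_less_dividend) auto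
      moreover have "n div d dvd N"
        using \<open>d dvd n\<close> \<open>0 < d\<close> less.prems(1) by (simp add: div_dvd_iff_mult)
      ultimately show "cpoly (a (n div d)) (z ^ d) = of_int (poly (a (n div lcm e d)) 1)"
        using less.IH[OF _ _ primitive_root_power[OF less.prems(2)]
            div_gcd_dvd_div[OF less.prems(3) \<open>d dvd n\<close>]]
        by (simp add: div_div_div_gcd)
    qed
  qed
qed

lemma value_at_power_of_primitive_root:
  assumes "primitive_root e z" "e dvd N" "d dvd N"
  shows "cpoly (a (N div d)) (z ^ d) = of_int (poly (a (N div lcm e d)) 1)"
proof -
  have "N div d dvd N" using assms(3) N_pos by (auto simp: div_dvd_iff_mult intro: dvd_mult2)
  then show ?thesis
    using value_at_primitive_root[OF _ primitive_root_power[OF assms(1)] div_gcd_dvd_div[OF assms(2,3)]]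
    by (simp add: div_div_div_gcd)
qed

end

theorem theorem11:
  fixes a :: "nat \<Rightarrow> int poly" and N :: nat
  assumes "q_euler_gauss a"
    and "N \<ge> 1"
    and "\<And>d. d dvd N \<Longrightarrow> card (prime_factors (N div d)) \<ge> 2 \<Longrightarrow> poly (a d) 1 \<noteq> 0"
  shows "qint N dvd (\<Sum>d | d dvd N. smult (moebius d) (qsubst (a (N div d)) d))"
proof -
  interpret q_euler_gauss_nonvanishing a N using assms by unfold_locales
  have "0 < N" using assms(2) by simp
  show ?thesis
  proof (subst qint_dvd_iff[OF \<open>0 < N\<close>], intro allI impI)
    fix z :: complex
    assume "z ^ N = 1" "z \<noteq> 1"
    then obtain e where e: "primitive_root e z" "e dvd N"
      using \<open>0 < N\<close> by (elim primitive_root_exists)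
    with \<open>z \<noteq> 1\<close> have "e \<noteq> 1" by (simp add: primitive_root_eq_1_iff)
    have "cpoly (\<Sum>d | d dvd N. smult (moebius d) (qsubst (a (N div d)) d)) z =
        (\<Sum>d | d dvd N. of_int (moebius d) * cpoly (a (N div d)) (z ^ d))"
      by (simp add: map_poly_of_int_sum map_poly_of_int_smult poly_sum cpoly_qsubst)
    also have "\<dots> = (\<Sum>d | d dvd N. of_int (moebius d) * of_int (poly (a (N div lcm e d)) 1))"
      using e by (intro sum.cong) (simp_all add: value_at_power_of_primitive_root)
    also have "\<dots> = 0"
      by (rule sum_moebius_lcm_eq_0[OF \<open>0 < N\<close> e(2) \<open>e \<noteq> 1\<close>])
    finally show "cpoly (\<Sum>d | d dvd N. smult (moebius d) (qsubst (a (N div d)) d)) z = 0" .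
  qed
qed

end
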